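(* Let $C$ be a strict globularily generated double category. Then the transversal category $\tau C$ of $C$ is the colimit (in $\mathbf{Cat}$) of the increasing chain of horizontal categories $H^C_1\subseteq H^C_2\subseteq\cdots$; i.e. $\tau C=\bigcup_n H^C_n$.
   Context: For a strict double category $C$: $C_0$ is the category of objects and vertical morphisms, $C_1$ the category of horizontal morphisms and 2-morphisms (composition = vertical composition), $i$ the horizontal identity, $\ast$ the strictly associative and unital horizontal composition. A 2-morphism is globular if its source and target are identity vertical morphisms. $C$ is globularily generated if the smallest sub-double category of $C$ containing all objects, vertical and horizontal morphisms and all globular 2-morphisms is $C$ itself. The transversal category $\tau C$ has as objects the vertical morphisms of $C$ and as morphisms the 2-morphisms of $C$ (a 2-morphism $\Phi$ goes from $s\Phi$ to $t\Phi$), with composition given by horizontal composition. Let $H^C_1$ consist of the globular 2-morphisms and horizontal identities $i_\alpha$ of vertical morphisms $\alpha$; $V^C_1$ is the subcategory of $C_1$ generated by $H^C_1$ (under vertical composition). For $n>1$, $H^C_n$ is the collection of all horizontal composites of finite composable sequences of morphisms of $V^C_{n-1}$, and $V^C_n$ is the subcategory of $C_1$ generated by $H^C_n$. For strict $C$, each $H^C_n$ is the set of morphisms of a subcategory of $\tau C$ containing all objects (the $n$-th horizontal category), and $H^C_n\subseteq H^C_{n+1}$. *)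

theory Defs
  imports Main
begin

text \<open>
A strict double category, presented as an internal category in Cat by its data.
Conventions: all compositions are written in diagrammatic order.
\<^item> C_0: objects Obj, vertical morphisms Ver with vdom, vcod, vid, vcomp
  (vcomp a b defined when vcod a = vdom b).
\<^item> C_1: objects = horizontal morphisms Hor, morphisms = 2-morphisms Sq with
  cdom, ccod (horizontal boundaries), identities cid, composition cvcomp
  (= vertical composition of 2-morphisms, defined when ccod P = cdom Q).
\<^item> source/target functors s,t : C_1 -> C_0: hdom/hcod on Hor, src/tgt on Sq.
\<^item> horizontal identity i : C_0 -> C_1: hid on objects, chid on vertical morphisms.
\<^item> horizontal composition *: hcomp on Hor (defined when hcod f = hdom g),
  chcomp on Sq (defined when tgt P = src Q).
\<close>

record ('o, 'v, 'h, 'c) dbl =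
  Obj :: "'o set"
  Ver :: "'v set"
  vdom :: "'v \<Rightarrow> 'o"
  vcod :: "'v \<Rightarrow> 'o"
  vid :: "'o \<Rightarrow> 'v"
  vcomp :: "'v \<Rightarrow> 'v \<Rightarrow> 'v"
  Hor :: "'h set"
  hdom :: "'h \<Rightarrow> 'o"
  hcod :: "'h \<Rightarrow> 'o"
  hid :: "'o \<Rightarrow> 'h"
  hcomp :: "'h \<Rightarrow> 'h \<Rightarrow> 'h"
  Sq :: "'c set"
  cdom :: "'c \<Rightarrow> 'h"
  ccod :: "'c \<Rightarrow> 'h"
  src :: "'c \<Rightarrow> 'v"
  tgt :: "'c \<Rightarrow> 'v"
  cid :: "'h \<Rightarrow> 'c"
  cvcomp :: "'c \<Rightarrow> 'c \<Rightarrow> 'c"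
  chid :: "'v \<Rightarrow> 'c"
  chcomp :: "'c \<Rightarrow> 'c \<Rightarrow> 'c"

definition strict_double_category :: "('o, 'v, 'h, 'c, 'z) dbl_scheme \<Rightarrow> bool" where
  "strict_double_category C \<longleftrightarrow>
   \<comment> \<open>C_0 is a category\<close>
   (\<forall>a\<in>Ver C. vdom C a \<in> Obj C \<and> vcod C a \<in> Obj C) \<and>
   (\<forall>x\<in>Obj C. vid C x \<in> Ver C \<and> vdom C (vid C x) = x \<and> vcod C (vid C x) = x) \<and>
   (\<forall>a\<in>Ver C. \<forall>b\<in>Ver C. vcod C a = vdom C b \<longrightarrow>
      vcomp C a b \<in> Ver C \<and> vdom C (vcomp C a b) = vdom C a \<and> vcod C (vcomp C a b) = vcod C b) \<and>
   (\<forall>a\<in>Ver C. \<forall>b\<in>Ver C. \<forall>c\<in>Ver C. vcod C a = vdom C b \<longrightarrow> vcod C b = vdom C c \<longrightarrow>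
      vcomp C (vcomp C a b) c = vcomp C a (vcomp C b c)) \<and>
   (\<forall>a\<in>Ver C. vcomp C (vid C (vdom C a)) a = a \<and> vcomp C a (vid C (vcod C a)) = a) \<and>
   \<comment> \<open>C_1 is a category\<close>
   (\<forall>P\<in>Sq C. cdom C P \<in> Hor C \<and> ccod C P \<in> Hor C) \<and>
   (\<forall>f\<in>Hor C. cid C f \<in> Sq C \<and> cdom C (cid C f) = f \<and> ccod C (cid C f) = f) \<and>
   (\<forall>P\<in>Sq C. \<forall>Q\<in>Sq C. ccod C P = cdom C Q \<longrightarrow>
      cvcomp C P Q \<in> Sq C \<and> cdom C (cvcomp C P Q) = cdom C P \<and> ccod C (cvcomp C P Q) = ccod C Q) \<and>
   (\<forall>P\<in>Sq C. \<forall>Q\<in>Sq C. \<forall>R\<in>Sq C. ccod C P = cdom C Q \<longrightarrow> ccod C Q = cdom C R \<longrightarrow>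
      cvcomp C (cvcomp C P Q) R = cvcomp C P (cvcomp C Q R)) \<and>
   (\<forall>P\<in>Sq C. cvcomp C (cid C (cdom C P)) P = P \<and> cvcomp C P (cid C (ccod C P)) = P) \<and>
   \<comment> \<open>source and target functors C_1 -> C_0\<close>
   (\<forall>f\<in>Hor C. hdom C f \<in> Obj C \<and> hcod C f \<in> Obj C) \<and>
   (\<forall>P\<in>Sq C. src C P \<in> Ver C \<and> tgt C P \<in> Ver C \<and>
      vdom C (src C P) = hdom C (cdom C P) \<and> vcod C (src C P) = hdom C (ccod C P) \<and>
      vdom C (tgt C P) = hcod C (cdom C P) \<and> vcod C (tgt C P) = hcod C (ccod C P)) \<and>
   (\<forall>f\<in>Hor C. src C (cid C f) = vid C (hdom C f) \<and> tgt C (cid C f) = vid C (hcod C f)) \<and>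
   (\<forall>P\<in>Sq C. \<forall>Q\<in>Sq C. ccod C P = cdom C Q \<longrightarrow>
      src C (cvcomp C P Q) = vcomp C (src C P) (src C Q) \<and>
      tgt C (cvcomp C P Q) = vcomp C (tgt C P) (tgt C Q)) \<and>
   \<comment> \<open>horizontal identity functor i : C_0 -> C_1\<close>
   (\<forall>x\<in>Obj C. hid C x \<in> Hor C \<and> hdom C (hid C x) = x \<and> hcod C (hid C x) = x) \<and>
   (\<forall>a\<in>Ver C. chid C a \<in> Sq C \<and> cdom C (chid C a) = hid C (vdom C a) \<and>
      ccod C (chid C a) = hid C (vcod C a) \<and> src C (chid C a) = a \<and> tgt C (chid C a) = a) \<and>
   (\<forall>x\<in>Obj C. chid C (vid C x) = cid C (hid C x)) \<and>
   (\<forall>a\<in>Ver C. \<forall>b\<in>Ver C. vcod C a = vdom C b \<longrightarrow>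
      chid C (vcomp C a b) = cvcomp C (chid C a) (chid C b)) \<and>
   \<comment> \<open>horizontal composition functor * : C_1 x_{C_0} C_1 -> C_1\<close>
   (\<forall>f\<in>Hor C. \<forall>g\<in>Hor C. hcod C f = hdom C g \<longrightarrow>
      hcomp C f g \<in> Hor C \<and> hdom C (hcomp C f g) = hdom C f \<and> hcod C (hcomp C f g) = hcod C g) \<and>
   (\<forall>P\<in>Sq C. \<forall>Q\<in>Sq C. tgt C P = src C Q \<longrightarrow>
      chcomp C P Q \<in> Sq C \<and>
      cdom C (chcomp C P Q) = hcomp C (cdom C P) (cdom C Q) \<and>
      ccod C (chcomp C P Q) = hcomp C (ccod C P) (ccod C Q) \<and>
      src C (chcomp C P Q) = src C P \<and> tgt C (chcomp C P Q) = tgt C Q) \<and>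
   (\<forall>f\<in>Hor C. \<forall>g\<in>Hor C. hcod C f = hdom C g \<longrightarrow>
      cid C (hcomp C f g) = chcomp C (cid C f) (cid C g)) \<and>
   (\<forall>P\<in>Sq C. \<forall>P'\<in>Sq C. \<forall>Q\<in>Sq C. \<forall>Q'\<in>Sq C.
      ccod C P = cdom C P' \<longrightarrow> ccod C Q = cdom C Q' \<longrightarrow> tgt C P = src C Q \<longrightarrow> tgt C P' = src C Q' \<longrightarrow>
      chcomp C (cvcomp C P P') (cvcomp C Q Q') = cvcomp C (chcomp C P Q) (chcomp C P' Q')) \<and>
   \<comment> \<open>strict associativity and unitality of *\<close>
   (\<forall>f\<in>Hor C. \<forall>g\<in>Hor C. \<forall>h\<in>Hor C. hcod C f = hdom C g \<longrightarrow> hcod C g = hdom C h \<longrightarrow>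
      hcomp C (hcomp C f g) h = hcomp C f (hcomp C g h)) \<and>
   (\<forall>f\<in>Hor C. hcomp C (hid C (hdom C f)) f = f \<and> hcomp C f (hid C (hcod C f)) = f) \<and>
   (\<forall>P\<in>Sq C. \<forall>Q\<in>Sq C. \<forall>R\<in>Sq C. tgt C P = src C Q \<longrightarrow> tgt C Q = src C R \<longrightarrow>
      chcomp C (chcomp C P Q) R = chcomp C P (chcomp C Q R)) \<and>
   (\<forall>P\<in>Sq C. chcomp C (chid C (src C P)) P = P \<and> chcomp C P (chid C (tgt C P)) = P)"

definition globular :: "('o, 'v, 'h, 'c, 'z) dbl_scheme \<Rightarrow> 'c \<Rightarrow> bool" where
  "globular C P \<longleftrightarrow> P \<in> Sq C \<and> (\<exists>x\<in>Obj C. src C P = vid C x) \<and> (\<exists>y\<in>Obj C. tgt C P = vid C y)"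

text \<open>A set S of 2-morphisms together with all objects, vertical and horizontal morphisms
forms a sub-double category.\<close>
definition sub_double_cells :: "('o, 'v, 'h, 'c, 'z) dbl_scheme \<Rightarrow> 'c set \<Rightarrow> bool" where
  "sub_double_cells C S \<longleftrightarrow> S \<subseteq> Sq C \<and>
     (\<forall>f\<in>Hor C. cid C f \<in> S) \<and>
     (\<forall>P\<in>S. \<forall>Q\<in>S. ccod C P = cdom C Q \<longrightarrow> cvcomp C P Q \<in> S) \<and>
     (\<forall>a\<in>Ver C. chid C a \<in> S) \<and>
     (\<forall>P\<in>S. \<forall>Q\<in>S. tgt C P = src C Q \<longrightarrow> chcomp C P Q \<in> S)"

definition globularly_generated :: "('o, 'v, 'h, 'c, 'z) dbl_scheme \<Rightarrow> bool" where
  "globularly_generated C \<longleftrightarrow>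
     Sq C = \<Inter>{S. sub_double_cells C S \<and> {P. globular C P} \<subseteq> S}"

fun vcomp_list :: "('o, 'v, 'h, 'c, 'z) dbl_scheme \<Rightarrow> 'c list \<Rightarrow> 'c" where
  "vcomp_list C [] = undefined"
| "vcomp_list C [P] = P"
| "vcomp_list C (P # Q # Ps) = cvcomp C P (vcomp_list C (Q # Ps))"

fun hcomp_list :: "('o, 'v, 'h, 'c, 'z) dbl_scheme \<Rightarrow> 'c list \<Rightarrow> 'c" where
  "hcomp_list C [] = undefined"
| "hcomp_list C [P] = P"
| "hcomp_list C (P # Q # Ps) = chcomp C P (hcomp_list C (Q # Ps))"

definition vgen :: "('o, 'v, 'h, 'c, 'z) dbl_scheme \<Rightarrow> 'c set \<Rightarrow> 'c set" where
  "vgen C H =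
     {vcomp_list C Ps | Ps. Ps \<noteq> [] \<and> set Ps \<subseteq> H \<and> successively (\<lambda>P Q. ccod C P = cdom C Q) Ps}
     \<union> {cid C (cdom C P) | P. P \<in> H} \<union> {cid C (ccod C P) | P. P \<in> H}"

definition hcomps :: "('o, 'v, 'h, 'c, 'z) dbl_scheme \<Rightarrow> 'c set \<Rightarrow> 'c set" where
  "hcomps C V =
     {hcomp_list C Ps | Ps. Ps \<noteq> [] \<and> set Ps \<subseteq> V \<and> successively (\<lambda>P Q. tgt C P = src C Q) Ps}"

text \<open>The n-th horizontal category H^C_n (as its set of morphisms), for n \<ge> 1;
index 0 is unused (empty).\<close>
fun Hcat :: "('o, 'v, 'h, 'c, 'z) dbl_scheme \<Rightarrow> nat \<Rightarrow> 'c set" where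
  "Hcat C 0 = {}"
| "Hcat C (Suc 0) = {P. globular C P} \<union> {chid C a | a. a \<in> Ver C}"
| "Hcat C (Suc (Suc n)) = hcomps C (vgen C (Hcat C (Suc n)))"

definition tau_mor :: "('o, 'v, 'h, 'c, 'z) dbl_scheme \<Rightarrow> 'c set" where
  "tau_mor C = Sq C"

end

theory Submission
  imports Defs
begin

text \<open>
The horizontal categories increase, since a single 2-morphism is both a vertical and a
horizontal composite of length one. Hence any two 2-morphisms of the union lie in a common
H_n, and their vertical or horizontal composite lies in H_(n+1). So the union is a
sub-double category containing every globular 2-morphism and every horizontal identity;
as C is globularily generated, it contains all 2-morphisms.
\<close>

lemma strict_double_categoryD:
  assumes "strict_double_category C"
  shows "\<forall>P\<in>Sq C. cdom C P \<in> Hor C \<and> ccod C P \<in> Hor C"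
    and "\<forall>f\<in>Hor C. cid C f \<in> Sq C \<and> cdom C (cid C f) = f \<and> ccod C (cid C f) = f"
    and "\<forall>P\<in>Sq C. \<forall>Q\<in>Sq C. ccod C P = cdom C Q \<longrightarrow>
      cvcomp C P Q \<in> Sq C \<and> cdom C (cvcomp C P Q) = cdom C P \<and> ccod C (cvcomp C P Q) = ccod C Q"
    and "\<forall>f\<in>Hor C. hdom C f \<in> Obj C \<and> hcod C f \<in> Obj C"
    and "\<forall>f\<in>Hor C. src C (cid C f) = vid C (hdom C f) \<and> tgt C (cid C f) = vid C (hcod C f)"
    and "\<forall>a\<in>Ver C. chid C a \<in> Sq C \<and> cdom C (chid C a) = hid C (vdom C a) \<and>
      ccod C (chid C a) = hid C (vcod C a) \<and> src C (chid C a) = a \<and> tgt C (chid C a) = a"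
    and "\<forall>P\<in>Sq C. \<forall>Q\<in>Sq C. tgt C P = src C Q \<longrightarrow>
      chcomp C P Q \<in> Sq C \<and>
      cdom C (chcomp C P Q) = hcomp C (cdom C P) (cdom C Q) \<and>
      ccod C (chcomp C P Q) = hcomp C (ccod C P) (ccod C Q) \<and>
      src C (chcomp C P Q) = src C P \<and> tgt C (chcomp C P Q) = tgt C Q"
  using assms unfolding strict_double_category_def by - (elim conjE, assumption)+

lemma globular_cid:
  assumes "strict_double_category C" "f \<in> Hor C"
  shows "globular C (cid C f)"
  using assms strict_double_categoryD(2,4,5)[OF assms(1)] unfolding globular_def by metis

lemma vcomp_list_in_Sq:
  assumes "strict_double_category C"
  shows "Ps \<noteq> [] \<Longrightarrow> set Ps \<subseteq> Sq C \<Longrightarrow> successively (\<lambda>P Q. ccod C P = cdom C Q) Ps \<Longrightarrow>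
    vcomp_list C Ps \<in> Sq C \<and> cdom C (vcomp_list C Ps) = cdom C (hd Ps)"
proof (induction Ps rule: induct_list012)
  case (3 P Q Ps)
  then show ?case using strict_double_categoryD(3)[OF assms] by auto
qed auto

lemma hcomp_list_in_Sq:
  assumes "strict_double_category C"
  shows "Ps \<noteq> [] \<Longrightarrow> set Ps \<subseteq> Sq C \<Longrightarrow> successively (\<lambda>P Q. tgt C P = src C Q) Ps \<Longrightarrow>
    hcomp_list C Ps \<in> Sq C \<and> src C (hcomp_list C Ps) = src C (hd Ps)"
proof (induction Ps rule: induct_list012)
  case (3 P Q Ps)
  then show ?case using strict_double_categoryD(7)[OF assms] by auto
qed auto

lemma vgen_subset_Sq:
  assumes "strict_double_category C" "H \<subseteq> Sq C"
  shows "vgen C H \<subseteq> Sq C"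
  unfolding vgen_def
  using assms vcomp_list_in_Sq[OF assms(1)] strict_double_categoryD(1,2)[OF assms(1)]
  by blast

lemma hcomps_subset_Sq:
  assumes "strict_double_category C" "H \<subseteq> Sq C"
  shows "hcomps C H \<subseteq> Sq C"
  unfolding hcomps_def using assms hcomp_list_in_Sq[OF assms(1)] by blast

lemma Hcat_subset_Sq:
  assumes "strict_double_category C"
  shows "Hcat C n \<subseteq> Sq C"
proof (induction n rule: induct_nat_012)
  case 1
  show ?case using strict_double_categoryD(6)[OF assms] by (auto simp: globular_def)
next
  case (ge2 n)
  then show ?case using hcomps_subset_Sq[OF assms] vgen_subset_Sq[OF assms] by simp
qed simp

lemma vcomp_list_in_vgen:
  "Ps \<noteq> [] \<Longrightarrow> set Ps \<subseteq> H \<Longrightarrow> successively (\<lambda>P Q. ccod C P = cdom C Q) Ps \<Longrightarrow>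
    vcomp_list C Ps \<in> vgen C H"
  unfolding vgen_def by blast

lemma hcomp_list_in_hcomps:
  "Ps \<noteq> [] \<Longrightarrow> set Ps \<subseteq> H \<Longrightarrow> successively (\<lambda>P Q. tgt C P = src C Q) Ps \<Longrightarrow>
    hcomp_list C Ps \<in> hcomps C H"
  unfolding hcomps_def by blast

lemma subset_vgen: "H \<subseteq> vgen C H"
  using vcomp_list_in_vgen[of "[_]"] by auto

lemma subset_hcomps: "H \<subseteq> hcomps C H"
  using hcomp_list_in_hcomps[of "[_]"] by auto

lemma cvcomp_in_vgen:
  "P \<in> H \<Longrightarrow> Q \<in> H \<Longrightarrow> ccod C P = cdom C Q \<Longrightarrow> cvcomp C P Q \<in> vgen C H"
  using vcomp_list_in_vgen[of "[P, Q]" H C] by simp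

lemma chcomp_in_hcomps:
  "P \<in> H \<Longrightarrow> Q \<in> H \<Longrightarrow> tgt C P = src C Q \<Longrightarrow> chcomp C P Q \<in> hcomps C H"
  using hcomp_list_in_hcomps[of "[P, Q]" H C] by simp

lemma Hcat_Suc_subset: "Hcat C (Suc n) \<subseteq> Hcat C (Suc (Suc n))"
  by (simp only: Hcat.simps) (rule subset_trans[OF subset_vgen subset_hcomps])

lemma Hcat_mono:
  assumes "1 \<le> m" "m \<le> n"
  shows "Hcat C m \<subseteq> Hcat C n"
  using assms(2)
proof (induction n rule: dec_induct)
  case (step n)
  then obtain k where "n = Suc k" using assms(1) by (cases n) auto
  then show ?case using step.IH Hcat_Suc_subset[of C k] by blast
qed simp

lemma Hcat_subset_Union_Hcat: "1 \<le> m \<Longrightarrow> Hcat C m \<subseteq> (\<Union>n\<in>{1..}. Hcat C n)"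
  by (auto simp del: Hcat.simps)

lemma Union_Hcat_common_level:
  assumes "P \<in> (\<Union>n\<in>{1..}. Hcat C n)" "Q \<in> (\<Union>n\<in>{1..}. Hcat C n)"
  obtains k where "P \<in> Hcat C (Suc k)" "Q \<in> Hcat C (Suc k)"
proof -
  obtain m n where "1 \<le> m" "P \<in> Hcat C m" "1 \<le> n" "Q \<in> Hcat C n"
    using assms by auto
  moreover obtain k where "max m n = Suc k"
    using \<open>1 \<le> m\<close> by (cases "max m n") auto
  ultimately show thesis
    using that Hcat_mono[of m "max m n" C] Hcat_mono[of n "max m n" C]
    by (metis max.cobounded1 max.cobounded2 subsetD)
qed

lemma cvcomp_in_Hcat_Suc:
  assumes "P \<in> Hcat C (Suc k)" "Q \<in> Hcat C (Suc k)" "ccod C P = cdom C Q"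
  shows "cvcomp C P Q \<in> Hcat C (Suc (Suc k))"
proof -
  have "cvcomp C P Q \<in> vgen C (Hcat C (Suc k))"
    by (rule cvcomp_in_vgen[OF assms])
  then show ?thesis
    using subset_hcomps[of "vgen C (Hcat C (Suc k))" C] by (simp only: Hcat.simps) blast
qed

lemma chcomp_in_Hcat_Suc:
  assumes "P \<in> Hcat C (Suc k)" "Q \<in> Hcat C (Suc k)" "tgt C P = src C Q"
  shows "chcomp C P Q \<in> Hcat C (Suc (Suc k))"
proof -
  have "P \<in> vgen C (Hcat C (Suc k))" "Q \<in> vgen C (Hcat C (Suc k))"
    using assms(1,2) subset_vgen[of "Hcat C (Suc k)" C] by blast+
  then show ?thesis
    using chcomp_in_hcomps[OF _ _ assms(3)] by (simp only: Hcat.simps)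
qed

lemma Union_Hcat_sub_double_cells:
  assumes "strict_double_category C"
  shows "sub_double_cells C (\<Union>n\<in>{1..}. Hcat C n)"
proof -
  let ?U = "\<Union>n\<in>{1..}. Hcat C n"
  have level_1: "Hcat C 1 \<subseteq> ?U" and level_Suc_Suc: "Hcat C (Suc (Suc k)) \<subseteq> ?U" for k
    by (rule Hcat_subset_Union_Hcat, simp)+
  have "cvcomp C P Q \<in> ?U" if P: "P \<in> ?U" and Q: "Q \<in> ?U" and comp: "ccod C P = cdom C Q"
    for P Q
  proof -
    obtain k where "P \<in> Hcat C (Suc k)" "Q \<in> Hcat C (Suc k)"
      using Union_Hcat_common_level[OF P Q] .
    then show ?thesis by (intro subsetD[OF level_Suc_Suc] cvcomp_in_Hcat_Suc[OF _ _ comp])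
  qed
  moreover have "chcomp C P Q \<in> ?U" if P: "P \<in> ?U" and Q: "Q \<in> ?U" and comp: "tgt C P = src C Q"
    for P Q
  proof -
    obtain k where "P \<in> Hcat C (Suc k)" "Q \<in> Hcat C (Suc k)"
      using Union_Hcat_common_level[OF P Q] .
    then show ?thesis by (intro subsetD[OF level_Suc_Suc] chcomp_in_Hcat_Suc[OF _ _ comp])
  qed
  moreover have "cid C f \<in> ?U" if "f \<in> Hor C" for f
  proof -
    have "cid C f \<in> Hcat C 1" using globular_cid[OF assms that] by simp
    then show ?thesis by (rule subsetD[OF level_1])
  qed
  moreover have "chid C a \<in> ?U" if "a \<in> Ver C" for a
  proof -
    have "chid C a \<in> Hcat C 1" using that by auto
    then show ?thesis by (rule subsetD[OF level_1])
  qed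
  moreover have "?U \<subseteq> Sq C"
    using Hcat_subset_Sq[OF assms] by (rule UN_least)
  ultimately show ?thesis
    unfolding sub_double_cells_def by (intro conjI ballI impI)
qed

theorem corollary4p2:
  assumes "strict_double_category C"
    and "globularly_generated C"
  shows "tau_mor C = (\<Union>n\<in>{1..}. Hcat C n)"
proof
  show "(\<Union>n\<in>{1..}. Hcat C n) \<subseteq> tau_mor C"
    using Hcat_subset_Sq[OF assms(1)] unfolding tau_mor_def by blast
  have "{P. globular C P} \<subseteq> Hcat C 1"
    by simp
  then have "{P. globular C P} \<subseteq> (\<Union>n\<in>{1..}. Hcat C n)"
    using Hcat_subset_Union_Hcat[of 1 C] by blast
  with Union_Hcat_sub_double_cells[OF assms(1)]
  have "\<Inter>{S. sub_double_cells C S \<and> {P. globular C P} \<subseteq> S} \<subseteq> (\<Union>n\<in>{1..}. Hcat C n)"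
    by (intro Inter_lower CollectI conjI)
  then have "Sq C \<subseteq> (\<Union>n\<in>{1..}. Hcat C n)"
    using assms(2) unfolding globularly_generated_def by simp
  then show "tau_mor C \<subseteq> (\<Union>n\<in>{1..}. Hcat C n)"
    unfolding tau_mor_def .
qed

end
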